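(* The Banach spaces $ces_\infty$ and $\ell_\infty$ are not isomorphic.
   Context: $ces_\infty$ is the space of real sequences $a=(a_n)_{n\ge1}$ with $\|a\|=\sup_{n\ge1}\frac1n\sum_{k=1}^n|a_k|<\infty$. "Isomorphic" means linearly isomorphic as Banach spaces. *)

theory Defs
  imports "HOL-Analysis.Analysis"
begin

(* Sequences are indexed from 0: a k here is a_(k+1) in the paper. *)

definition ces_avg :: "(nat \<Rightarrow> real) \<Rightarrow> nat \<Rightarrow> real" where
  "ces_avg a n = (\<Sum>k\<le>n. \<bar>a k\<bar>) / real (n + 1)"

definition ces_inf :: "(nat \<Rightarrow> real) set" where
  "ces_inf = {a. bdd_above (range (ces_avg a))}"

definition ces_norm :: "(nat \<Rightarrow> real) \<Rightarrow> real" where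
  "ces_norm a = (SUP n. ces_avg a n)"

definition l_inf :: "(nat \<Rightarrow> real) set" where
  "l_inf = {a. bdd_above (range (\<lambda>n. \<bar>a n\<bar>))}"

definition linf_norm :: "(nat \<Rightarrow> real) \<Rightarrow> real" where
  "linf_norm a = (SUP n. \<bar>a n\<bar>)"

definition seq_isomorphic ::
  "(nat \<Rightarrow> real) set \<Rightarrow> ((nat \<Rightarrow> real) \<Rightarrow> real) \<Rightarrow>
   (nat \<Rightarrow> real) set \<Rightarrow> ((nat \<Rightarrow> real) \<Rightarrow> real) \<Rightarrow> bool" where
  "seq_isomorphic X nX Y nY \<longleftrightarrow>
     (\<exists>T. bij_betw T X Y
        \<and> (\<forall>a\<in>X. \<forall>b\<in>X. T (\<lambda>n. a n + b n) = (\<lambda>n. T a n + T b n))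
        \<and> (\<forall>c::real. \<forall>a\<in>X. T (\<lambda>n. c * a n) = (\<lambda>n. c * T a n))
        \<and> (\<exists>C. \<forall>a\<in>X. nY (T a) \<le> C * nX a)
        \<and> (\<exists>D. \<forall>a\<in>X. nX a \<le> D * nY (T a)))"

end

theory Submission
  imports Defs
begin

text \<open>
  Suppose \<open>T\<close> were an isomorphism from \<open>ces\<^sub>\<infinity>\<close> onto \<open>\<ell>\<^sub>\<infinity>\<close>. The spikes \<open>v\<^sub>i = N e\<^sub>N\<^sub>+\<^sub>i\<close>
  (\<open>i < N\<close>) have Cesaro norm at most 1, so their images \<open>u\<^sub>i\<close> are uniformly bounded.
  In \<open>\<ell>\<^sub>\<infinity>\<close> every coordinate can be treated separately: writing the column
  \<open>(u\<^sub>i(k))\<^sub>i\<close> as the mean of a random sign pattern, one finds bounded vectors \<open>f\<^sub>I\<close>, indexed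
  by sign patterns \<open>I\<close>, whose Rademacher averages are \<open>G\<^sub>i u\<^sub>i\<close> with
  \<open>\<Sum>\<^sub>i G\<^sub>i = \<Sum>\<^sub>I |\<Sum>\<^sub>i \<epsilon>\<^sub>i(I)| \<ge> 2\<^sup>N \<surd>N / 2\<close>. Pulling the \<open>f\<^sub>I\<close> back to \<open>ces\<^sub>\<infinity>\<close> and reading
  off the coordinates \<open>N + i\<close> gives \<open>N \<Sum>\<^sub>i G\<^sub>i \<le> 2\<^sup>N \<cdot> 2N \<cdot> \<parallel>T\<parallel> \<parallel>T\<^sup>-\<^sup>1\<parallel>\<close>, since
  a Cesaro bounded sequence has block sums \<open>\<Sum>\<^sub>i<\<^sub>N |a(N+i)| \<le> 2N \<parallel>a\<parallel>\<close>. Hence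
  \<open>\<surd>N \<le> 4 \<parallel>T\<parallel> \<parallel>T\<^sup>-\<^sup>1\<parallel>\<close> for every \<open>N\<close>, which is absurd.
\<close>

definition rademacher :: "nat set \<Rightarrow> nat \<Rightarrow> real" where
  "rademacher J i = (if i \<in> J then -1 else 1)"

text \<open>The probability of the sign pattern \<open>J\<close> when the signs at \<open>j \<in> F\<close> are independent
  with means \<open>a j\<close>.\<close>
definition sign_prob :: "(nat \<Rightarrow> real) \<Rightarrow> nat set \<Rightarrow> nat set \<Rightarrow> real" where
  "sign_prob a F J = (\<Prod>j\<in>F. (1 + rademacher J j * a j) / 2)"

lemma sign_prob_split:
  assumes "finite F" "J \<subseteq> F"
  shows "sign_prob a F J = (\<Prod>j\<in>J. (1 - a j) / 2) * (\<Prod>j\<in>F - J. (1 + a j) / 2)"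
proof -
  have "sign_prob a F J
      = (\<Prod>j\<in>J. (1 + rademacher J j * a j) / 2) * (\<Prod>j\<in>F - J. (1 + rademacher J j * a j) / 2)"
    unfolding sign_prob_def using prod.subset_diff[OF assms(2,1)] by (simp add: mult.commute)
  also have "\<dots> = (\<Prod>j\<in>J. (1 - a j) / 2) * (\<Prod>j\<in>F - J. (1 + a j) / 2)"
    by (intro arg_cong2[where f="(*)"] prod.cong) (auto simp: rademacher_def)
  finally show ?thesis .
qed

lemma sum_sign_prob:
  assumes "finite F"
  shows "(\<Sum>J\<in>Pow F. sign_prob a F J) = 1"
proof -
  have "(\<Sum>J\<in>Pow F. sign_prob a F J)
      = (\<Sum>J\<in>Pow F. (\<Prod>j\<in>J. (1 - a j) / 2) * (\<Prod>j\<in>F - J. (1 + a j) / 2))"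
    using sign_prob_split[OF assms] by (intro sum.cong) auto
  also have "\<dots> = (\<Prod>j\<in>F. (1 - a j) / 2 + (1 + a j) / 2)"
    by (rule prod_add[OF assms, symmetric])
  also have "\<dots> = 1" by (simp add: add_divide_distrib[symmetric])
  finally show ?thesis .
qed

lemma sum_sign_prob_rademacher:
  assumes "finite F" "i \<in> F"
  shows "(\<Sum>J\<in>Pow F. sign_prob a F J * rademacher J i) = a i"
proof -
  define minus where "minus j = (if j = i then -1 else 1) * ((1 - a j) / 2)" for j
  have "(\<Sum>J\<in>Pow F. sign_prob a F J * rademacher J i)
      = (\<Sum>J\<in>Pow F. (\<Prod>j\<in>J. minus j) * (\<Prod>j\<in>F - J. (1 + a j) / 2))"
  proof (intro sum.cong refl)
    fix J assume J: "J \<in> Pow F"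
    then have "finite J" using assms(1) finite_subset by auto
    then have "(\<Prod>j\<in>J. (if j = i then -1 else 1)) = rademacher J i"
      by (simp add: prod.delta' rademacher_def)
    then have "(\<Prod>j\<in>J. minus j) = rademacher J i * (\<Prod>j\<in>J. (1 - a j) / 2)"
      unfolding minus_def prod.distrib by simp
    then show "sign_prob a F J * rademacher J i
        = (\<Prod>j\<in>J. minus j) * (\<Prod>j\<in>F - J. (1 + a j) / 2)"
      using sign_prob_split[OF assms(1)] J by (simp add: mult_ac)
  qed
  also have "\<dots> = (\<Prod>j\<in>F. minus j + (1 + a j) / 2)"
    by (rule prod_add[OF assms(1), symmetric])
  also have "\<dots> = (\<Prod>j\<in>F. if j = i then a i else 1)"
    by (intro prod.cong) (auto simp: minus_def field_simps)
  also have "\<dots> = a i" using assms by (simp add: prod.delta)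
  finally show ?thesis .
qed

lemma sign_prob_nonneg:
  assumes "\<And>j. j \<in> F \<Longrightarrow> \<bar>a j\<bar> \<le> 1"
  shows "sign_prob a F J \<ge> 0"
  unfolding sign_prob_def
proof (intro prod_nonneg)
  fix j assume "j \<in> F"
  then show "0 \<le> (1 + rademacher J j * a j) / 2"
    using assms[of j] by (auto simp: rademacher_def)
qed

lemma rademacher_sym_diff: "rademacher (sym_diff I J) i = rademacher I i * rademacher J i"
  by (auto simp: rademacher_def)

lemma sum_rademacher_sym_diff:
  assumes "finite F" "J \<subseteq> F"
  shows "(\<Sum>I\<in>Pow F. rademacher I i * g (sym_diff I J))
       = rademacher J i * (\<Sum>I\<in>Pow F. rademacher I i * g I)"
proof -
  have bij: "bij_betw (\<lambda>I. sym_diff I J) (Pow F) (Pow F)"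
    by (rule bij_betwI[where g="\<lambda>I. sym_diff I J"]) (use assms in auto)
  have "(\<Sum>I\<in>Pow F. rademacher I i * g I)
      = (\<Sum>I\<in>Pow F. rademacher (sym_diff I J) i * g (sym_diff I J))"
    using sum.reindex_bij_betw[OF bij, of "\<lambda>I. rademacher I i * g I"] by simp
  also have "\<dots> = rademacher J i * (\<Sum>I\<in>Pow F. rademacher I i * g (sym_diff I J))"
    by (simp add: rademacher_sym_diff sum_distrib_left mult_ac)
  finally show ?thesis by (simp add: rademacher_def)
qed

text \<open>This is where \<open>\<ell>\<^sub>\<infinity>\<close> enters: each column \<open>(u i k / A)\<^sub>i\<close> lies in the cube \<open>[-1,1]\<^sup>N\<close>,
  so it is the mean of a random sign pattern \<open>J\<close>, and \<open>f I k\<close> averages \<open>g\<close> over \<open>I \<triangle> J\<close>.\<close>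
lemma linf_sign_averaging:
  fixes u :: "nat \<Rightarrow> nat \<Rightarrow> real" and g :: "nat set \<Rightarrow> real"
  assumes A: "A > 0" and u: "\<And>i k. i < N \<Longrightarrow> \<bar>u i k\<bar> \<le> A" and g: "\<And>I. \<bar>g I\<bar> \<le> 1"
  obtains f where "\<And>I k. \<bar>f I k\<bar> \<le> A"
    and "\<And>i k. i < N \<Longrightarrow> (\<Sum>I\<in>Pow {..<N}. rademacher I i * f I k)
                        = (\<Sum>I\<in>Pow {..<N}. rademacher I i * g I) * u i k"
proof
  define P where "P = Pow {..<N}"
  define p where "p k J = sign_prob (\<lambda>j. u j k / A) {..<N} J" for k J
  define f where "f I k = A * (\<Sum>J\<in>P. p k J * g (sym_diff I J))" for I k
  have p_nonneg: "p k J \<ge> 0" for k J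
    unfolding p_def using u A by (intro sign_prob_nonneg) (simp add: abs_divide)
  have p_sum: "(\<Sum>J\<in>P. p k J) = 1" for k
    unfolding p_def P_def by (rule sum_sign_prob) simp
  show "\<bar>f I k\<bar> \<le> A" for I k
  proof -
    have "\<bar>\<Sum>J\<in>P. p k J * g (sym_diff I J)\<bar> \<le> (\<Sum>J\<in>P. p k J)"
      by (rule order_trans[OF sum_abs sum_mono])
         (use p_nonneg g in \<open>auto simp: abs_mult intro: mult_left_le\<close>)
    then show ?thesis using A p_sum by (simp add: f_def abs_mult)
  qed
  fix i k assume i: "i < N"
  have "(\<Sum>I\<in>P. rademacher I i * f I k)
      = A * (\<Sum>J\<in>P. p k J * (\<Sum>I\<in>P. rademacher I i * g (sym_diff I J)))"
    unfolding f_def sum_distrib_left by (subst sum.swap) (simp add: mult_ac)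
  also have "\<dots> = A * (\<Sum>J\<in>P. p k J * rademacher J i) * (\<Sum>I\<in>P. rademacher I i * g I)"
    by (simp add: P_def sum_rademacher_sym_diff sum_distrib_right mult.assoc)
  also have "(\<Sum>J\<in>P. p k J * rademacher J i) = u i k / A"
    unfolding p_def P_def using i by (subst sum_sign_prob_rademacher) auto
  finally show "(\<Sum>I\<in>Pow {..<N}. rademacher I i * f I k)
      = (\<Sum>I\<in>Pow {..<N}. rademacher I i * g I) * u i k"
    using A by (simp add: P_def)
qed

definition rademacher_sum :: "nat \<Rightarrow> nat set \<Rightarrow> real" where
  "rademacher_sum N I = (\<Sum>i<N. rademacher I i)"

lemma sum_Pow_lessThan_Suc:
  "(\<Sum>I\<in>Pow {..<Suc N}. h I) = (\<Sum>I\<in>Pow {..<N}. h I + h (insert N I))"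
proof -
  have "Pow {..<Suc N} = Pow {..<N} \<union> insert N ` Pow {..<N}"
    by (simp add: lessThan_Suc Pow_insert)
  moreover have "Pow {..<N} \<inter> insert N ` Pow {..<N} = {}" by auto
  moreover have "inj_on (insert N) (Pow {..<N})"
    by (rule inj_onI) (metis PowD Diff_insert_absorb lessThan_iff less_irrefl subsetD)
  ultimately show ?thesis
    by (simp add: sum.union_disjoint sum.reindex sum.distrib)
qed

lemma rademacher_sum_Suc:
  assumes "I \<subseteq> {..<N}"
  shows "rademacher_sum (Suc N) I = rademacher_sum N I + 1"
    and "rademacher_sum (Suc N) (insert N I) = rademacher_sum N I - 1"
proof -
  have "(\<Sum>i<N. rademacher (insert N I) i) = (\<Sum>i<N. rademacher I i)"
    by (intro sum.cong) (auto simp: rademacher_def)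
  then show "rademacher_sum (Suc N) (insert N I) = rademacher_sum N I - 1"
    by (simp add: rademacher_sum_def rademacher_def)
  show "rademacher_sum (Suc N) I = rademacher_sum N I + 1"
    using assms by (auto simp: rademacher_sum_def rademacher_def)
qed

lemma sum_rademacher_sum_power2:
  "(\<Sum>I\<in>Pow {..<N}. (rademacher_sum N I)^2) = real N * 2^N"
proof (induction N)
  case 0 then show ?case by (simp add: rademacher_sum_def)
next
  case (Suc N)
  have "(\<Sum>I\<in>Pow {..<Suc N}. (rademacher_sum (Suc N) I)^2)
      = (\<Sum>I\<in>Pow {..<N}. 2 * (rademacher_sum N I)^2 + 2)"
    unfolding sum_Pow_lessThan_Suc
    by (intro sum.cong refl) (auto simp: rademacher_sum_Suc power2_eq_square algebra_simps)
  also have "\<dots> = 2 * (\<Sum>I\<in>Pow {..<N}. (rademacher_sum N I)^2) + 2 * 2^N"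
    by (simp add: sum.distrib sum_distrib_left card_Pow)
  finally show ?case using Suc by (simp add: algebra_simps)
qed

lemma sum_rademacher_sum_power4:
  "(\<Sum>I\<in>Pow {..<N}. (rademacher_sum N I)^4) = (3 * real N^2 - 2 * real N) * 2^N"
proof (induction N)
  case 0 then show ?case by (simp add: rademacher_sum_def)
next
  case (Suc N)
  have "(\<Sum>I\<in>Pow {..<Suc N}. (rademacher_sum (Suc N) I)^4)
      = (\<Sum>I\<in>Pow {..<N}. 2 * (rademacher_sum N I)^4 + 12 * (rademacher_sum N I)^2 + 2)"
    unfolding sum_Pow_lessThan_Suc
    by (intro sum.cong refl)
       (auto simp: rademacher_sum_Suc power2_eq_square power4_eq_xxxx algebra_simps)
  also have "\<dots> = 2 * (\<Sum>I\<in>Pow {..<N}. (rademacher_sum N I)^4)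
                   + 12 * (\<Sum>I\<in>Pow {..<N}. (rademacher_sum N I)^2) + 2 * 2^N"
    by (simp add: sum.distrib sum_distrib_left card_Pow)
  finally show ?case
    using Suc sum_rademacher_sum_power2[of N] by (simp add: algebra_simps power2_eq_square)
qed

text \<open>With \<open>y = |s| / t\<close> this is \<open>y - 4 y\<^sup>3 / 27 \<le> 1\<close>, i.e. \<open>(2y - 3)\<^sup>2 (y + 3) \<ge> 0\<close>.\<close>
lemma abs_ge_power2_power4_combination:
  fixes s t :: real
  assumes "t > 0"
  shows "s^2 / t - 4 * s^4 / (27 * t^3) \<le> \<bar>s\<bar>"
proof -
  define y where "y = \<bar>s\<bar> / t"
  have y: "y \<ge> 0" "\<bar>s\<bar> = y * t" using assms by (auto simp: y_def)
  have s2: "s^2 = (y * t)^2" by (simp flip: y(2))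
  have "s^4 = (y * t)^4"
    using power_mult[of s 2 2] power_mult[of "y * t" 2 2] by (simp add: s2)
  then have "s^2 / t - 4 * s^4 / (27 * t^3) = y * t * (y - 4 * y^3 / 27)"
    using assms unfolding s2 by (simp add: power2_eq_square power3_eq_cube power4_eq_xxxx field_simps)
  also have "\<dots> \<le> y * t * 1"
  proof (intro mult_left_mono)
    have "0 \<le> (2 * y - 3)^2 * (y + 3)" using y by simp
    then show "y - 4 * y^3 / 27 \<le> 1" by (simp add: power2_eq_square power3_eq_cube algebra_simps)
  qed (use y assms in simp)
  finally show ?thesis by (simp add: y)
qed

text \<open>A Khintchine-type lower bound for \<open>N = t\<^sup>2\<close> signs: sum the pointwise bound above over
  all sign patterns and insert the second and fourth moments.\<close>
lemma sum_abs_rademacher_sum_ge: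
  assumes "t \<ge> 1"
  shows "(\<Sum>I\<in>Pow {..<t^2}. \<bar>rademacher_sum (t^2) I\<bar>) \<ge> 2^(t^2) * (real t / 2)"
proof -
  define N where "N = t^2"
  have t: "real t > 0" using assms by simp
  have "2^N * (real t / 2) \<le> 2^N * (real t - 4 * (3 * real t^2 - 2) / (27 * real t))"
  proof (intro mult_left_mono)
    have "4 * (3 * real t^2 - 2) / (27 * real t) \<le> 4 * (3 * real t^2) / (27 * real t)"
      using t by (intro divide_right_mono) auto
    also have "\<dots> = 4 * real t / 9" using t by (simp add: power2_eq_square field_simps)
    finally show "real t / 2 \<le> real t - 4 * (3 * real t^2 - 2) / (27 * real t)" by linarith
  qed simp
  also have "\<dots> = (real N * 2^N) / real t - 4 * ((3 * real N^2 - 2 * real N) * 2^N) / (27 * real t^3)"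
    using t by (simp add: N_def field_simps power2_eq_square power3_eq_cube)
  also have "\<dots> = (\<Sum>I\<in>Pow {..<N}. (rademacher_sum N I)^2) / real t
                    - 4 * (\<Sum>I\<in>Pow {..<N}. (rademacher_sum N I)^4) / (27 * real t^3)"
    by (simp only: sum_rademacher_sum_power2 sum_rademacher_sum_power4)
  also have "\<dots> = (\<Sum>I\<in>Pow {..<N}. (rademacher_sum N I)^2 / real t
                    - 4 * (rademacher_sum N I)^4 / (27 * real t^3))"
    by (simp only: sum_subtractf sum_divide_distrib sum_distrib_left times_divide_eq_right)
  also have "\<dots> \<le> (\<Sum>I\<in>Pow {..<N}. \<bar>rademacher_sum N I\<bar>)"
    by (intro sum_mono abs_ge_power2_power4_combination t)
  finally show ?thesis by (simp add: N_def)
qed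

lemma ces_avg_nonneg: "ces_avg a n \<ge> 0"
  by (simp add: ces_avg_def sum_nonneg)

lemma ces_avg_add: "ces_avg (\<lambda>n. a n + b n) n \<le> ces_avg a n + ces_avg b n"
proof -
  have "(\<Sum>k\<le>n. \<bar>a k + b k\<bar>) \<le> (\<Sum>k\<le>n. \<bar>a k\<bar>) + (\<Sum>k\<le>n. \<bar>b k\<bar>)"
    by (simp add: sum.distrib[symmetric] sum_mono abs_triangle_ineq)
  then show ?thesis by (simp add: ces_avg_def add_divide_distrib[symmetric] divide_right_mono)
qed

lemma ces_avg_scale: "ces_avg (\<lambda>n. c * a n) n = \<bar>c\<bar> * ces_avg a n"
  by (simp add: ces_avg_def abs_mult sum_distrib_left)

lemma ces_inf_add:
  assumes "a \<in> ces_inf" "b \<in> ces_inf"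
  shows "(\<lambda>n. a n + b n) \<in> ces_inf"
proof -
  obtain A B where "\<And>n. ces_avg a n \<le> A" "\<And>n. ces_avg b n \<le> B"
    using assms by (auto simp: ces_inf_def bdd_above_def)
  then have "ces_avg (\<lambda>n. a n + b n) n \<le> A + B" for n
    using ces_avg_add[of a b n] by (smt (verit))
  then show ?thesis by (auto simp: ces_inf_def bdd_above_def)
qed

lemma ces_inf_scale:
  assumes "a \<in> ces_inf"
  shows "(\<lambda>n. c * a n) \<in> ces_inf"
proof -
  obtain A where "\<And>n. ces_avg a n \<le> A" using assms by (auto simp: ces_inf_def bdd_above_def)
  then have "ces_avg (\<lambda>n. c * a n) n \<le> \<bar>c\<bar> * A" for n
    by (simp add: ces_avg_scale mult_left_mono)
  then show ?thesis by (auto simp: ces_inf_def bdd_above_def)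
qed

lemma ces_inf_zero: "(\<lambda>n. 0) \<in> ces_inf"
  by (auto simp: ces_inf_def ces_avg_def)

lemma ces_inf_sum:
  assumes "finite F" "\<And>j. j \<in> F \<Longrightarrow> a j \<in> ces_inf"
  shows "(\<lambda>n. \<Sum>j\<in>F. c j * a j n) \<in> ces_inf"
  using assms by (induction F rule: finite_induct) (simp_all add: ces_inf_zero ces_inf_add ces_inf_scale)

lemma ces_avg_le_norm: "a \<in> ces_inf \<Longrightarrow> ces_avg a n \<le> ces_norm a"
  unfolding ces_norm_def ces_inf_def by (auto intro: cSUP_upper)

lemma ces_norm_le: "(\<And>n. ces_avg a n \<le> M) \<Longrightarrow> ces_norm a \<le> M"
  unfolding ces_norm_def by (rule cSUP_least) auto

lemma ces_norm_nonneg: "a \<in> ces_inf \<Longrightarrow> ces_norm a \<ge> 0"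
  using ces_avg_le_norm[of a 0] ces_avg_nonneg[of a 0] by linarith

lemma sum_abs_block_le_ces_norm:
  assumes "N \<ge> 1" "a \<in> ces_inf"
  shows "(\<Sum>i<N. \<bar>a (N + i)\<bar>) \<le> 2 * real N * ces_norm a"
proof -
  have "(\<Sum>i<N. \<bar>a (N + i)\<bar>) = (\<Sum>k\<in>(\<lambda>i. N + i) ` {..<N}. \<bar>a k\<bar>)"
    by (simp add: sum.reindex)
  also have "\<dots> \<le> (\<Sum>k\<le>2 * N - 1. \<bar>a k\<bar>)"
    by (intro sum_mono2) auto
  also have "\<dots> = ces_avg a (2 * N - 1) * (2 * real N)"
    using assms(1) by (simp add: ces_avg_def of_nat_diff)
  also have "\<dots> \<le> ces_norm a * (2 * real N)"
    by (intro mult_right_mono ces_avg_le_norm assms) auto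
  finally show ?thesis by (simp add: mult_ac)
qed

definition spike :: "nat \<Rightarrow> nat \<Rightarrow> nat \<Rightarrow> real" where
  "spike N i = (\<lambda>n. if n = N + i then real N else 0)"

lemma ces_avg_spike_le: "ces_avg (spike N i) n \<le> 1"
proof -
  have "(\<Sum>k\<le>n. \<bar>spike N i k\<bar>) = (\<Sum>k\<le>n. if k = N + i then real N else 0)"
    by (intro sum.cong) (auto simp: spike_def)
  then show ?thesis by (auto simp: ces_avg_def field_simps)
qed

lemma spike_in_ces_inf: "spike N i \<in> ces_inf"
  using ces_avg_spike_le by (auto simp: ces_inf_def bdd_above_def)

lemma ces_norm_spike_le: "ces_norm (spike N i) \<le> 1"
  by (rule ces_norm_le[OF ces_avg_spike_le])

lemma abs_le_linf_norm: "f \<in> l_inf \<Longrightarrow> \<bar>f k\<bar> \<le> linf_norm f"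
  unfolding linf_norm_def l_inf_def by (auto intro: cSUP_upper)

lemma l_inf_uniformly_bounded:
  assumes "\<And>k. \<bar>f k\<bar> \<le> A"
  shows "f \<in> l_inf" "linf_norm f \<le> A"
  using assms unfolding linf_norm_def l_inf_def
  by (auto intro!: cSUP_least simp: bdd_above_def)

lemma ces_inf_linear_sum:
  assumes add: "\<forall>a\<in>ces_inf. \<forall>b\<in>ces_inf. T (\<lambda>n. a n + b n) = (\<lambda>n. T a n + T b n)"
    and scale: "\<forall>c::real. \<forall>a\<in>ces_inf. T (\<lambda>n. c * a n) = (\<lambda>n. c * T a n)"
    and "finite F" "\<And>j. j \<in> F \<Longrightarrow> a j \<in> ces_inf"
  shows "T (\<lambda>n. \<Sum>j\<in>F. c j * a j n) = (\<lambda>n. \<Sum>j\<in>F. c j * T (a j) n)"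
  using assms(3,4)
proof (induction F rule: finite_induct)
  case empty
  show ?case using scale[rule_format, of "\<lambda>n. 0" 0] ces_inf_zero by simp
next
  case (insert x F)
  have x: "a x \<in> ces_inf" and rest: "(\<lambda>n. \<Sum>j\<in>F. c j * a j n) \<in> ces_inf"
    using insert by (auto intro: ces_inf_sum)
  have "T (\<lambda>n. \<Sum>j\<in>insert x F. c j * a j n)
      = T (\<lambda>n. (\<lambda>n. c x * a x n) n + (\<lambda>n. \<Sum>j\<in>F. c j * a j n) n)"
    using insert by simp
  also have "\<dots> = (\<lambda>n. T (\<lambda>n. c x * a x n) n + T (\<lambda>n. \<Sum>j\<in>F. c j * a j n) n)"
    using add[rule_format, OF ces_inf_scale[OF x, of "c x"] rest] by simp
  also have "\<dots> = (\<lambda>n. \<Sum>j\<in>insert x F. c j * T (a j) n)"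
    using insert scale x by simp
  finally show ?case .
qed

lemma ces_inf_linear_combination_preimage:
  assumes inj: "inj_on T ces_inf"
    and add: "\<forall>a\<in>ces_inf. \<forall>b\<in>ces_inf. T (\<lambda>n. a n + b n) = (\<lambda>n. T a n + T b n)"
    and scale: "\<forall>c::real. \<forall>a\<in>ces_inf. T (\<lambda>n. c * a n) = (\<lambda>n. c * T a n)"
    and F: "finite F" and a: "\<And>j. j \<in> F \<Longrightarrow> a j \<in> ces_inf" and v: "v \<in> ces_inf"
    and image: "\<And>k. (\<Sum>j\<in>F. c j * T (a j) k) = d * T v k"
  shows "(\<lambda>n. \<Sum>j\<in>F. c j * a j n) = (\<lambda>n. d * v n)"
proof (rule inj_onD[OF inj])
  have "T (\<lambda>n. d * v n) = (\<lambda>k. \<Sum>j\<in>F. c j * T (a j) k)"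
    using scale v by (simp add: image)
  then show "T (\<lambda>n. \<Sum>j\<in>F. c j * a j n) = T (\<lambda>n. d * v n)"
    using ces_inf_linear_sum[OF add scale F a] by simp
qed (use F a v in \<open>auto intro: ces_inf_sum ces_inf_scale\<close>)

lemma ces_inf_isomorphism_sign_averaging:
  assumes bij: "bij_betw T ces_inf l_inf"
    and add: "\<forall>a\<in>ces_inf. \<forall>b\<in>ces_inf. T (\<lambda>n. a n + b n) = (\<lambda>n. T a n + T b n)"
    and scale: "\<forall>c::real. \<forall>a\<in>ces_inf. T (\<lambda>n. c * a n) = (\<lambda>n. c * T a n)"
    and bounded: "\<And>a. a \<in> ces_inf \<Longrightarrow> linf_norm (T a) \<le> A * ces_norm a"
    and inverse_bounded: "\<And>a. a \<in> ces_inf \<Longrightarrow> ces_norm a \<le> D * linf_norm (T a)"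
    and A: "A > 0" and D: "D \<ge> 0" and g: "\<And>I. \<bar>g I\<bar> \<le> 1"
  obtains a where "\<And>I. a I \<in> ces_inf" and "\<And>I. ces_norm (a I) \<le> D * A"
    and "\<And>i. i < N \<Longrightarrow> (\<Sum>I\<in>Pow {..<N}. rademacher I i * a I (N + i))
                      = (\<Sum>I\<in>Pow {..<N}. rademacher I i * g I) * real N"
proof -
  define u where "u i = T (spike N i)" for i
  have u_bounded: "\<bar>u i k\<bar> \<le> A" for i k
  proof -
    have "\<bar>u i k\<bar> \<le> linf_norm (T (spike N i))"
      unfolding u_def by (rule abs_le_linf_norm[OF bij_betw_apply[OF bij spike_in_ces_inf]])
    also have "\<dots> \<le> A * ces_norm (spike N i)" by (rule bounded[OF spike_in_ces_inf])
    also have "\<dots> \<le> A" using mult_left_mono[OF ces_norm_spike_le, of A] A by simp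
    finally show ?thesis .
  qed
  obtain f where f_bounded: "\<And>I k. \<bar>f I k\<bar> \<le> A"
    and f_average: "\<And>i k. i < N \<Longrightarrow> (\<Sum>I\<in>Pow {..<N}. rademacher I i * f I k)
                                   = (\<Sum>I\<in>Pow {..<N}. rademacher I i * g I) * u i k"
    using linf_sign_averaging[of A N u g] A u_bounded g by blast
  have f_in: "f I \<in> l_inf" and f_norm: "linf_norm (f I) \<le> A" for I
    using l_inf_uniformly_bounded[of "f I" A] f_bounded by auto
  define a where "a I = inv_into ces_inf T (f I)" for I
  have a: "a I \<in> ces_inf" for I
    unfolding a_def by (rule bij_betw_apply[OF bij_betw_inv_into[OF bij] f_in])
  have Ta: "T (a I) = f I" for I
    unfolding a_def by (rule bij_betw_inv_into_right[OF bij f_in])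
  have a_norm: "ces_norm (a I) \<le> D * A" for I
    using inverse_bounded[OF a, of I] mult_left_mono[OF f_norm[of I] D] by (simp add: Ta)
  have coordinate: "(\<Sum>I\<in>Pow {..<N}. rademacher I i * a I (N + i))
      = (\<Sum>I\<in>Pow {..<N}. rademacher I i * g I) * real N" if i: "i < N" for i
  proof -
    have "(\<lambda>n. \<Sum>I\<in>Pow {..<N}. rademacher I i * a I n)
        = (\<lambda>n. (\<Sum>I\<in>Pow {..<N}. rademacher I i * g I) * spike N i n)"
      using bij_betw_imp_inj_on[OF bij] add scale _ a spike_in_ces_inf
      by (rule ces_inf_linear_combination_preimage) (simp_all add: Ta f_average[OF i] u_def)
    from fun_cong[OF this, of "N + i"] show ?thesis by (simp add: spike_def)
  qed
  show ?thesis using a a_norm coordinate by (rule that)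
qed

lemma ces_inf_isomorphism_constant_bound:
  assumes bij: "bij_betw T ces_inf l_inf"
    and add: "\<forall>a\<in>ces_inf. \<forall>b\<in>ces_inf. T (\<lambda>n. a n + b n) = (\<lambda>n. T a n + T b n)"
    and scale: "\<forall>c::real. \<forall>a\<in>ces_inf. T (\<lambda>n. c * a n) = (\<lambda>n. c * T a n)"
    and bounded: "\<And>a. a \<in> ces_inf \<Longrightarrow> linf_norm (T a) \<le> A * ces_norm a"
    and inverse_bounded: "\<And>a. a \<in> ces_inf \<Longrightarrow> ces_norm a \<le> D * linf_norm (T a)"
    and A: "A > 0" and D: "D \<ge> 0" and t: "t \<ge> 1"
  shows "real t \<le> 4 * D * A"
proof -
  define N where "N = t^2"
  have N: "N \<ge> 1" using t by (simp add: N_def)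
  define g :: "nat set \<Rightarrow> real" where "g I = sgn (rademacher_sum N I)" for I
  have g_bounded: "\<bar>g I\<bar> \<le> 1" for I by (simp add: g_def sgn_if)
  obtain a where a: "\<And>I. a I \<in> ces_inf" and a_norm: "\<And>I. ces_norm (a I) \<le> D * A"
    and coordinate: "\<And>i. i < N \<Longrightarrow> (\<Sum>I\<in>Pow {..<N}. rademacher I i * a I (N + i))
                                 = (\<Sum>I\<in>Pow {..<N}. rademacher I i * g I) * real N"
    by (rule ces_inf_isomorphism_sign_averaging[where N=N and g=g, OF bij add scale bounded inverse_bounded
        A D g_bounded]) blast+
  have "2^N * (real t / 2) * real N \<le> (\<Sum>I\<in>Pow {..<N}. \<bar>rademacher_sum N I\<bar>) * real N"
    using mult_right_mono[OF sum_abs_rademacher_sum_ge[OF t], of "real N"] by (simp add: N_def)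
  also have "\<dots> = (\<Sum>I\<in>Pow {..<N}. \<Sum>i<N. rademacher I i * g I) * real N"
    by (simp add: g_def rademacher_sum_def abs_sgn sum_distrib_right)
  also have "\<dots> = (\<Sum>i<N. \<Sum>I\<in>Pow {..<N}. rademacher I i * a I (N + i))"
    by (simp add: sum.swap[of _ "Pow {..<N}"] sum_distrib_right coordinate)
  also have "\<dots> = (\<Sum>I\<in>Pow {..<N}. \<Sum>i<N. rademacher I i * a I (N + i))"
    by (rule sum.swap)
  also have "\<dots> \<le> (\<Sum>I\<in>Pow {..<N}. 2 * real N * (D * A))"
  proof (intro sum_mono)
    fix I
    have "(\<Sum>i<N. rademacher I i * a I (N + i)) \<le> (\<Sum>i<N. \<bar>a I (N + i)\<bar>)"
      by (intro sum_mono) (auto simp: rademacher_def)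
    also have "\<dots> \<le> 2 * real N * ces_norm (a I)" by (rule sum_abs_block_le_ces_norm[OF N a])
    also have "\<dots> \<le> 2 * real N * (D * A)" by (intro mult_left_mono a_norm) auto
    finally show "(\<Sum>i<N. rademacher I i * a I (N + i)) \<le> 2 * real N * (D * A)" .
  qed
  also have "\<dots> = (2^N * real N) * (2 * (D * A))" by (simp add: card_Pow)
  finally have "(2^N * real N) * (real t / 2) \<le> (2^N * real N) * (2 * (D * A))"
    by (simp add: mult_ac)
  then have "real t / 2 \<le> 2 * (D * A)" by (rule mult_left_le_imp_le) (use N in simp)
  then show ?thesis by simp
qed

theorem corollary4:
  shows "\<not> seq_isomorphic ces_inf ces_norm l_inf linf_norm"
proof
  assume "seq_isomorphic ces_inf ces_norm l_inf linf_norm"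
  then obtain T C D where bij: "bij_betw T ces_inf l_inf"
    and add: "\<forall>a\<in>ces_inf. \<forall>b\<in>ces_inf. T (\<lambda>n. a n + b n) = (\<lambda>n. T a n + T b n)"
    and scale: "\<forall>c::real. \<forall>a\<in>ces_inf. T (\<lambda>n. c * a n) = (\<lambda>n. c * T a n)"
    and bounded: "\<forall>a\<in>ces_inf. linf_norm (T a) \<le> C * ces_norm a"
    and inverse_bounded: "\<forall>a\<in>ces_inf. ces_norm a \<le> D * linf_norm (T a)"
    unfolding seq_isomorphic_def by blast
  have "linf_norm (T a) \<le> max C 1 * ces_norm a" if a: "a \<in> ces_inf" for a
    using bounded a mult_right_mono[OF max.cobounded1 ces_norm_nonneg[OF a]]
    by (fastforce intro: order_trans)
  moreover have "ces_norm a \<le> max D 0 * linf_norm (T a)" if a: "a \<in> ces_inf" for a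
  proof -
    have "linf_norm (T a) \<ge> 0"
      using abs_le_linf_norm[OF bij_betw_apply[OF bij a], of 0] by linarith
    then show ?thesis
      using inverse_bounded a mult_right_mono[OF max.cobounded1] by (fastforce intro: order_trans)
  qed
  ultimately have "real t \<le> 4 * max D 0 * max C 1" if "t \<ge> 1" for t
    using ces_inf_isomorphism_constant_bound[OF bij add scale] that by simp
  from this[of "nat \<lceil>4 * max D 0 * max C 1\<rceil> + 1"] show False by linarith
qed

end
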